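(* For each integer $n\geq 4$, $prc(W_n)=n$, where $W_n$ is the wheel on $n+1$ vertices.
   Context: The wheel $W_n=C_n+K_1$ is the join of a cycle $C_n$ with a single vertex (adjacent to all cycle vertices). A path in an edge-coloured graph is a rainbow path if its edges receive pairwise distinct colours. The proper rainbow connection number $prc(G)$ is the minimum number of colours in a proper edge-colouring (adjacent edges get distinct colours) such that every two distinct vertices are joined by a rainbow path. *)

theory Defs
  imports Main
begin

text \<open>A simple graph is given by a vertex set and a set of edges, each edge a 2-element set.\<close>

type_synonym 'a graph = "'a set \<times> 'a set set"

definition verts :: "'a graph \<Rightarrow> 'a set" where "verts G = fst G"
definition edges :: "'a graph \<Rightarrow> 'a set set" where "edges G = snd G"

definition wheel :: "nat \<Rightarrow> nat graph" where
  "wheel n = ({0..n},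
     {{i, (i + 1) mod n} | i. i < n} \<union> {{i, n} | i. i < n})"

definition proper_edge_colouring :: "'a graph \<Rightarrow> ('a set \<Rightarrow> nat) \<Rightarrow> bool" where
  "proper_edge_colouring G c \<longleftrightarrow>
     (\<forall>e\<in>edges G. \<forall>f\<in>edges G. e \<noteq> f \<and> e \<inter> f \<noteq> {} \<longrightarrow> c e \<noteq> c f)"

definition path_edges :: "'a list \<Rightarrow> 'a set list" where
  "path_edges p = map (\<lambda>(x, y). {x, y}) (zip p (tl p))"

definition is_path :: "'a graph \<Rightarrow> 'a \<Rightarrow> 'a \<Rightarrow> 'a list \<Rightarrow> bool" where
  "is_path G u v p \<longleftrightarrow> p \<noteq> [] \<and> hd p = u \<and> last p = v \<and> distinct p \<and>
     set p \<subseteq> verts G \<and> set (path_edges p) \<subseteq> edges G"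

definition rainbow_path :: "'a graph \<Rightarrow> ('a set \<Rightarrow> nat) \<Rightarrow> 'a \<Rightarrow> 'a \<Rightarrow> 'a list \<Rightarrow> bool" where
  "rainbow_path G c u v p \<longleftrightarrow> is_path G u v p \<and> distinct (map c (path_edges p))"

definition rainbow_connected :: "'a graph \<Rightarrow> ('a set \<Rightarrow> nat) \<Rightarrow> bool" where
  "rainbow_connected G c \<longleftrightarrow>
     (\<forall>u\<in>verts G. \<forall>v\<in>verts G. u \<noteq> v \<longrightarrow> (\<exists>p. rainbow_path G c u v p))"

definition proper_rainbow_colouring :: "'a graph \<Rightarrow> nat \<Rightarrow> ('a set \<Rightarrow> nat) \<Rightarrow> bool" where
  "proper_rainbow_colouring G k c \<longleftrightarrow>
     proper_edge_colouring G c \<and> c ` edges G \<subseteq> {..<k} \<and> rainbow_connected G c"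

definition prc :: "'a graph \<Rightarrow> nat" where
  "prc G = (LEAST k. \<exists>c. proper_rainbow_colouring G k c)"

end

theory Submission
  imports Defs "HOL-Number_Theory.Cong"
begin

text \<open>The n spokes meet at the hub, so a proper colouring gives them n distinct colours.
  Conversely, colour the spoke to cycle vertex i with i and the rim edge from i to i + 1 with
  i + 2 (mod n). For n \<ge> 3 this is proper, and any proper colouring of a graph with a dominating
  vertex is rainbow connected: two vertices are joined through the hub by at most two spokes,
  which meet and hence differ in colour.\<close>

lemma proper_edge_colouring_inj_on_star:
  assumes "proper_edge_colouring G c"
  shows "inj_on c {e \<in> edges G. v \<in> e}"
  using assms unfolding proper_edge_colouring_def inj_on_def by blast

lemma card_star_le_colours:
  assumes "proper_edge_colouring G c" and "c ` edges G \<subseteq> {..<k}"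
  shows "card {e \<in> edges G. v \<in> e} \<le> k"
proof -
  have "card {e \<in> edges G. v \<in> e} \<le> card {..<k}"
    using card_inj_on_le[OF proper_edge_colouring_inj_on_star[OF assms(1)]] assms(2) by blast
  then show ?thesis by simp
qed

lemma path_edges_Cons_Cons: "path_edges (x # y # p) = {x, y} # path_edges (y # p)"
  unfolding path_edges_def by simp

lemma path_edges_singleton [simp]: "path_edges [x] = []"
  unfolding path_edges_def by simp

lemma rainbow_connected_if_dominating_vertex:
  assumes proper: "proper_edge_colouring G c" and h: "h \<in> verts G"
    and dominating: "\<And>v. v \<in> verts G \<Longrightarrow> v \<noteq> h \<Longrightarrow> {v, h} \<in> edges G"
  shows "rainbow_connected G c"
  unfolding rainbow_connected_def
proof (intro ballI impI)
  fix u v assume u: "u \<in> verts G" and v: "v \<in> verts G" and "u \<noteq> v"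
  have spoke: "{h, w} \<in> edges G" if "w \<in> verts G" "w \<noteq> h" for w
    using dominating[OF that] by (simp add: insert_commute)
  consider "u = h" | "v = h" | "u \<noteq> h" "v \<noteq> h" by blast
  then show "\<exists>p. rainbow_path G c u v p"
  proof cases
    case 1
    then have "rainbow_path G c u v [h, v]"
      using \<open>u \<noteq> v\<close> h v spoke[OF v]
      by (simp add: rainbow_path_def is_path_def path_edges_Cons_Cons)
    then show ?thesis ..
  next
    case 2
    then have "rainbow_path G c u v [u, h]"
      using \<open>u \<noteq> v\<close> h u dominating[OF u]
      by (simp add: rainbow_path_def is_path_def path_edges_Cons_Cons)
    then show ?thesis ..
  next
    case 3
    have "c {u, h} \<noteq> c {h, v}"
      using proper dominating[OF u 3(1)] spoke[OF v 3(2)] \<open>u \<noteq> v\<close> 3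
      unfolding proper_edge_colouring_def by (metis doubleton_eq_iff insert_disjoint(2) insertI1)
    then have "rainbow_path G c u v [u, h, v]"
      using 3 \<open>u \<noteq> v\<close> h u v dominating[OF u 3(1)] spoke[OF v 3(2)]
      by (simp add: rainbow_path_def is_path_def path_edges_Cons_Cons)
    then show ?thesis ..
  qed
qed

lemma mod_add_two_neq:
  fixes i n :: nat
  assumes "3 \<le> n" "i < n"
  shows "(i + 2) mod n \<noteq> i \<and> (i + 2) mod n \<noteq> Suc i mod n"
proof -
  consider "i + 2 < n" | "i + 2 = n" | "i + 1 = n" using assms by linarith
  then show ?thesis
  proof cases
    case 3
    then have "(i + 2) mod n = 1" using assms by (simp add: mod_Suc)
    then show ?thesis using 3 assms by auto
  qed (use assms in auto)
qed

lemma inj_on_add_mod: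
  fixes k n :: nat
  shows "inj_on (\<lambda>i. (i + k) mod n) {..<n}"
  using cong_add_rcancel_nat[of _ k _ n] by (auto simp: inj_on_def cong_def)

lemma verts_wheel: "verts (wheel n) = {0..n}"
  unfolding verts_def wheel_def by simp

lemma edges_wheel: "edges (wheel n) = {{i, Suc i mod n} | i. i < n} \<union> {{i, n} | i. i < n}"
  unfolding edges_def wheel_def by simp

lemma wheel_edgeE:
  assumes "e \<in> edges (wheel n)"
  obtains (rim) i where "i < n" "e = {i, Suc i mod n}"
    | (spoke) i where "i < n" "e = {i, n}"
  using assms unfolding edges_wheel by blast

lemma hub_notin_rim:
  assumes "i < n"
  shows "n \<notin> {i, Suc i mod n}"
proof -
  have "Suc i mod n < n" using assms by simp
  then have "n \<noteq> i" "n \<noteq> Suc i mod n" using assms by linarith+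
  then show ?thesis by simp
qed

lemma wheel_hub_star: "0 < n \<Longrightarrow> {e \<in> edges (wheel n). n \<in> e} = (\<lambda>i. {i, n}) ` {..<n}"
  by (auto simp: edges_wheel)

lemma card_wheel_hub_star:
  assumes "0 < n"
  shows "card {e \<in> edges (wheel n). n \<in> e} = n"
proof -
  have "inj_on (\<lambda>i. {i, n}) {..<n}"
    by (auto simp: inj_on_def doubleton_eq_iff)
  then show ?thesis by (simp add: wheel_hub_star[OF assms] card_image)
qed

text \<open>The tail of the rim edge {i, (i + 1) mod n} is the unique endpoint whose successor is also
  an endpoint; this needs n \<ge> 3.\<close>
definition wheel_colouring :: "nat \<Rightarrow> nat set \<Rightarrow> nat" where
  "wheel_colouring n e =
     (if n \<in> e then the_elem (e - {n}) else ((THE i. i \<in> e \<and> Suc i mod n \<in> e) + 2) mod n)"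

lemma wheel_colouring_spoke: "i < n \<Longrightarrow> wheel_colouring n {i, n} = i"
  by (simp add: wheel_colouring_def insert_Diff_if)

lemma wheel_colouring_rim:
  assumes "3 \<le> n" "i < n"
  shows "wheel_colouring n {i, Suc i mod n} = (i + 2) mod n"
proof -
  have "Suc (Suc i mod n) mod n \<notin> {i, Suc i mod n}"
    using mod_add_two_neq[OF assms] by (simp add: mod_Suc_eq)
  then have "(THE x. x \<in> {i, Suc i mod n} \<and> Suc x mod n \<in> {i, Suc i mod n}) = i"
    by (intro the_equality) auto
  then show ?thesis
    using hub_notin_rim[OF assms(2)] by (simp add: wheel_colouring_def)
qed

lemma wheel_colouring_range:
  assumes "3 \<le> n"
  shows "wheel_colouring n ` edges (wheel n) \<subseteq> {..<n}"
proof
  fix x assume "x \<in> wheel_colouring n ` edges (wheel n)"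
  then obtain e where "e \<in> edges (wheel n)" "x = wheel_colouring n e" by blast
  then show "x \<in> {..<n}"
    using assms by (cases rule: wheel_edgeE) (simp_all add: wheel_colouring_rim wheel_colouring_spoke)
qed

lemma wheel_colouring_rim_spoke_neq:
  assumes "3 \<le> n" "i < n" "j < n" and meet: "{i, Suc i mod n} \<inter> {j, n} \<noteq> {}"
  shows "wheel_colouring n {i, Suc i mod n} \<noteq> wheel_colouring n {j, n}"
proof -
  have "j \<in> {i, Suc i mod n}"
    using meet hub_notin_rim[OF assms(2)] by auto
  then show ?thesis
    using mod_add_two_neq[OF assms(1,2)] assms
    by (auto simp: wheel_colouring_rim wheel_colouring_spoke)
qed

lemma wheel_colouring_proper:
  assumes "3 \<le> n"
  shows "proper_edge_colouring (wheel n) (wheel_colouring n)"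
  unfolding proper_edge_colouring_def
proof (intro ballI impI)
  fix e f assume e: "e \<in> edges (wheel n)" and f: "f \<in> edges (wheel n)"
    and adjacent: "e \<noteq> f \<and> e \<inter> f \<noteq> {}"
  from e f show "wheel_colouring n e \<noteq> wheel_colouring n f"
  proof (cases rule: wheel_edgeE[case_product wheel_edgeE])
    case (rim_rim i j)
    then have "i \<noteq> j" using adjacent by blast
    then have "(i + 2) mod n \<noteq> (j + 2) mod n"
      using inj_onD[OF inj_on_add_mod[of 2 n], of i j] rim_rim(1,3) by auto
    then show ?thesis
      using rim_rim assms by (simp add: wheel_colouring_rim)
  next
    case (rim_spoke i j)
    then show ?thesis
      using adjacent wheel_colouring_rim_spoke_neq[OF assms rim_spoke(1,3)] by simp
  next
    case (spoke_rim i j)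
    then show ?thesis
      using adjacent wheel_colouring_rim_spoke_neq[OF assms spoke_rim(3,1)]
      by (simp add: Int_commute not_sym)
  next
    case (spoke_spoke i j)
    then show ?thesis
      using adjacent by (auto simp: wheel_colouring_spoke)
  qed
qed

lemma wheel_colouring_proper_rainbow:
  assumes "3 \<le> n"
  shows "proper_rainbow_colouring (wheel n) n (wheel_colouring n)"
proof -
  have "rainbow_connected (wheel n) (wheel_colouring n)"
    by (rule rainbow_connected_if_dominating_vertex[OF wheel_colouring_proper[OF assms], of n])
      (auto simp: verts_wheel edges_wheel)
  then show ?thesis
    using wheel_colouring_proper[OF assms] wheel_colouring_range[OF assms]
    by (simp add: proper_rainbow_colouring_def)
qed

theorem proposition5p2:
  fixes n :: nat
  assumes "n \<ge> 4"
  shows "prc (wheel n) = n"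
  unfolding prc_def
proof (rule Least_equality)
  have "3 \<le> n" using assms by simp
  then show "\<exists>c. proper_rainbow_colouring (wheel n) n c"
    using wheel_colouring_proper_rainbow by blast
next
  fix k assume "\<exists>c. proper_rainbow_colouring (wheel n) k c"
  then obtain c where "proper_edge_colouring (wheel n) c" "c ` edges (wheel n) \<subseteq> {..<k}"
    by (auto simp: proper_rainbow_colouring_def)
  then have "card {e \<in> edges (wheel n). n \<in> e} \<le> k"
    by (rule card_star_le_colours)
  then show "n \<le> k"
    using card_wheel_hub_star assms by simp
qed

end
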